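(* For every integer $k$ with $1\le k\le p-1$ and all $s\in\mathcal S_0^{(k)}$, $t\in\mathcal T_0^{(k)}$ one has $\langle s,t\rangle_k^{\rm BD}=\langle s,t\rangle_k^{\rm Boc}$ in $\mathcal Q^k$.
   Context: Let $p$ be a prime, $n\ge1$, $G$ a cyclic group of order $p^n$ with generator $\gamma$, $\mathcal R=\mathbb Z/p^n[G]$, $\mathcal I\subset\mathcal R$ the augmentation ideal, $\mathcal Q^k=\mathcal I^k/\mathcal I^{k+1}$, $N=\sum_{g\in G}g$. For an $\mathcal R$-module $M$, $M^\ast=\mathrm{Hom}_{\mathcal R}(M,\mathcal R)$ and $M_0=M^G$. Let $\mathcal S,\mathcal T$ be finitely generated $\mathcal R$-modules, $X,Y$ free $\mathcal R$-modules of finite rank, and $0\to\mathcal S\to X\xrightarrow{\ell}Y^\ast\to\mathcal T^\ast\to0$ exact; its dual is $0\to\mathcal T\to Y\xrightarrow{\ell^\ast}X^\ast\to\mathcal S^\ast\to0$ with $\ell^\ast(y)(x)=\ell(x)(y)$; we regard $\mathcal S\subset X$, $\mathcal T\subset Y$. Put $\mathcal S_0^{(k)}=\mathcal S_0\cap\mathcal I^{k-1}\mathcal S$, $\mathcal T_0^{(k)}=\mathcal T_0\cap\mathcal I^{k-1}\mathcal T$. Bertolini–Darmon pairing: $D^{(k)}=(-1)^k\sum_{i=0}^{p^n-1}\binom ik\gamma^{i-k}$. For $1\le k\le p-1$, $s\in\mathcal S_0^{(k)}$, $t\in\mathcal T_0^{(k)}$, choose $\tilde s\in\mathcal S$, $\tilde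 t\in\mathcal T$ with $(\gamma-1)^{k-1}\tilde s=s$, $(\gamma-1)^{k-1}\tilde t=t$, and $x_s\in X$, $y_t\in Y$ with $D^{(k-1)}x_s=\tilde s$, $D^{(k-1)}y_t=\tilde t$ (these exist); then $\ell(x_s)(y_t)\in\mathcal I^k$ and $\langle s,t\rangle^{\rm BD}_k$ is its class in $\mathcal Q^k$ (independent of all choices). Bockstein pairing: let $C=[X\xrightarrow{\ell}Y^\ast]$ (degrees 1,2) with filtration $\mathcal I^iC$ and spectral sequence $E_k^{i,j}=Z_k^{i,j}/(Z_{k-1}^{i+1,j-1}+B_{k-1}^{i,j})$, $Z_k^{i,j}=\ker(\mathcal I^iC^{i+j}\to C^{i+j+1}/\mathcal I^{i+k}C^{i+j+1})$, $B_k^{i,j}=\mathcal I^iC^{i+j}\cap d(\mathcal I^{i-k}C^{i+j-1})$ ($\mathcal I^m=\mathcal R$ for $m\le0$), differentials induced by $d$. Thus $E_k^{0,1}=\{x\in X:\ell(x)\in\mathcal I^kY^\ast\}/\{x\in\mathcal IX:\ell(x)\in\mathcal I^kY^\ast\}$, $E_k^{k,2-k}=\mathcal I^kY^\ast/(\mathcal I^{k+1}Y^\ast+\mathcal I^kY^\ast\cap\ell(\mathcal IX))$, and the derived Bockstein map $\beta^{(k)}=d_k^{0,1}$ sends the class of $x$ to the class of $\ell(x)$. Let $F_k^{i,j}$ be the analogous spectral sequence for $D=[Y\xrightarrow{\ell^\ast}X^\ast]$. The paper identifies $E_k^{0,1}\cong\mathcal S_0^{(k)}$ and $F_k^{0,1}\cong\mathcal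 T_0^{(k)}$ via the maps induced by $x\mapsto Nx$, $y\mapsto Ny$, and uses the cup product $E_k^{k,2-k}\times F_k^{0,1}\to\mathcal Q^k$, (class of $f$, class of $y$) $\mapsto f(y)\bmod\mathcal I^{k+1}$, to get $\iota_k:E_k^{k,2-k}\to\mathrm{Hom}(\mathcal T_0^{(k)},\mathcal Q^k)$. Then $\langle s,t\rangle_k^{\rm Boc}:=\iota_k(\beta^{(k)}(s))(t)$. *)

theory Defs
  imports Main "HOL-Computational_Algebra.Primes"
begin

text \<open>An element of R is represented canonically as a function G -> Z/q,
  where G = {0..<q} (written additively, gamma corresponds to 1), with values
  in {0..<q} and value 0 outside {0..<q}.\<close>

type_synonym relt = "nat \<Rightarrow> int"
type_synonym vect = "nat \<Rightarrow> relt"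

definition rcarrier :: "nat \<Rightarrow> relt set" where
  "rcarrier q = {f. (\<forall>i<q. 0 \<le> f i \<and> f i < int q) \<and> (\<forall>i. q \<le> i \<longrightarrow> f i = 0)}"

definition rzero :: relt where "rzero = (\<lambda>_. 0)"

definition radd :: "nat \<Rightarrow> relt \<Rightarrow> relt \<Rightarrow> relt" where
  "radd q f g = (\<lambda>i. if i < q then (f i + g i) mod int q else 0)"

definition rneg :: "nat \<Rightarrow> relt \<Rightarrow> relt" where
  "rneg q f = (\<lambda>i. if i < q then (- f i) mod int q else 0)"

definition rmul :: "nat \<Rightarrow> relt \<Rightarrow> relt \<Rightarrow> relt" where
  "rmul q f g = (\<lambda>i. if i < q then (\<Sum>j<q. f j * g ((i + q - j) mod q)) mod int q else 0)"

definition rone :: "nat \<Rightarrow> relt" where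
  "rone q = (\<lambda>i. if i = 0 then 1 mod int q else 0)"

definition rscal :: "nat \<Rightarrow> int \<Rightarrow> relt \<Rightarrow> relt" where
  "rscal q c f = (\<lambda>i. if i < q then (c * f i) mod int q else 0)"

definition gam :: "nat \<Rightarrow> relt" where
  "gam q = (\<lambda>i. if i < q \<and> i = 1 mod q then 1 mod int q else 0)"

text \<open>the norm element N = sum of all g in G\<close>
definition Nrm :: "nat \<Rightarrow> relt" where
  "Nrm q = (\<lambda>i. if i < q then 1 mod int q else 0)"

fun rpow :: "nat \<Rightarrow> relt \<Rightarrow> nat \<Rightarrow> relt" where
  "rpow q f 0 = rone q"
| "rpow q f (Suc k) = rmul q (rpow q f k) f"

fun rsumn :: "nat \<Rightarrow> (nat \<Rightarrow> relt) \<Rightarrow> nat \<Rightarrow> relt" where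
  "rsumn q F 0 = rzero"
| "rsumn q F (Suc m) = radd q (rsumn q F m) (F m)"

definition gm1 :: "nat \<Rightarrow> relt" where
  "gm1 q = radd q (gam q) (rneg q (rone q))"

definition augI :: "nat \<Rightarrow> relt set" where
  "augI q = {f \<in> rcarrier q. (\<Sum>i<q. f i) mod int q = 0}"

inductive_set iprod :: "nat \<Rightarrow> relt set \<Rightarrow> relt set \<Rightarrow> relt set"
  for q :: nat and A :: "relt set" and B :: "relt set" where
  iprod_zero: "rzero \<in> iprod q A B"
| iprod_mul: "a \<in> A \<Longrightarrow> b \<in> B \<Longrightarrow> rmul q a b \<in> iprod q A B"
| iprod_add: "u \<in> iprod q A B \<Longrightarrow> v \<in> iprod q A B \<Longrightarrow> radd q u v \<in> iprod q A B"

fun Ipow :: "nat \<Rightarrow> nat \<Rightarrow> relt set" where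
  "Ipow q 0 = rcarrier q"
| "Ipow q (Suc k) = iprod q (augI q) (Ipow q k)"

text \<open>class of u in R / I^(k+1); Q^k = I^k/I^(k+1) sits inside R/I^(k+1)\<close>
definition qcls :: "nat \<Rightarrow> nat \<Rightarrow> relt \<Rightarrow> relt set" where
  "qcls q k u = {v \<in> rcarrier q. radd q u (rneg q v) \<in> Ipow q (Suc k)}"

definition vcarrier :: "nat \<Rightarrow> nat \<Rightarrow> vect set" where
  "vcarrier q m = {x. (\<forall>j<m. x j \<in> rcarrier q) \<and> (\<forall>j. m \<le> j \<longrightarrow> x j = rzero)}"

definition vzero :: vect where "vzero = (\<lambda>_. rzero)"

definition vadd :: "nat \<Rightarrow> vect \<Rightarrow> vect \<Rightarrow> vect" where
  "vadd q x y = (\<lambda>j. radd q (x j) (y j))"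

definition smul :: "nat \<Rightarrow> relt \<Rightarrow> vect \<Rightarrow> vect" where
  "smul q r x = (\<lambda>j. rmul q r (x j))"

inductive_set mprod :: "nat \<Rightarrow> relt set \<Rightarrow> vect set \<Rightarrow> vect set"
  for q :: nat and J :: "relt set" and V :: "vect set" where
  mprod_zero: "vzero \<in> mprod q J V"
| mprod_mul: "r \<in> J \<Longrightarrow> v \<in> V \<Longrightarrow> smul q r v \<in> mprod q J V"
| mprod_add: "u \<in> mprod q J V \<Longrightarrow> w \<in> mprod q J V \<Longrightarrow> vadd q u w \<in> mprod q J V"

section \<open>The map l : X = R^a -> Y^* = R^b (dual basis), given by a b x a matrix M\<close>

text \<open>evaluation f(y) of f in Y^* (coordinates w.r.t. the dual basis) at y in Y = R^m\<close>
definition evp :: "nat \<Rightarrow> nat \<Rightarrow> vect \<Rightarrow> vect \<Rightarrow> relt" where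
  "evp q m f y = rsumn q (\<lambda>i. rmul q (f i) (y i)) m"

definition ell :: "nat \<Rightarrow> nat \<Rightarrow> nat \<Rightarrow> (nat \<Rightarrow> nat \<Rightarrow> relt) \<Rightarrow> vect \<Rightarrow> vect" where
  "ell q a b M x = (\<lambda>i. if i < b then rsumn q (\<lambda>j. rmul q (M i j) (x j)) a else rzero)"

text \<open>the dual map l^* : Y -> X^*, l^*(y)(x) = l(x)(y)\<close>
definition ellstar :: "nat \<Rightarrow> nat \<Rightarrow> nat \<Rightarrow> (nat \<Rightarrow> nat \<Rightarrow> relt) \<Rightarrow> vect \<Rightarrow> vect" where
  "ellstar q a b M y = (\<lambda>j. if j < a then rsumn q (\<lambda>i. rmul q (M i j) (y i)) b else rzero)"

definition Ssub :: "nat \<Rightarrow> nat \<Rightarrow> nat \<Rightarrow> (nat \<Rightarrow> nat \<Rightarrow> relt) \<Rightarrow> vect set" where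
  "Ssub q a b M = {x \<in> vcarrier q a. ell q a b M x = vzero}"

definition Tsub :: "nat \<Rightarrow> nat \<Rightarrow> nat \<Rightarrow> (nat \<Rightarrow> nat \<Rightarrow> relt) \<Rightarrow> vect set" where
  "Tsub q a b M = {y \<in> vcarrier q b. ellstar q a b M y = vzero}"

definition fixedpart :: "nat \<Rightarrow> vect set \<Rightarrow> vect set" where
  "fixedpart q V = {v \<in> V. smul q (gam q) v = v}"

definition S0k :: "nat \<Rightarrow> nat \<Rightarrow> nat \<Rightarrow> (nat \<Rightarrow> nat \<Rightarrow> relt) \<Rightarrow> nat \<Rightarrow> vect set" where
  "S0k q a b M k = fixedpart q (Ssub q a b M) \<inter> mprod q (Ipow q (k - 1)) (Ssub q a b M)"

definition T0k :: "nat \<Rightarrow> nat \<Rightarrow> nat \<Rightarrow> (nat \<Rightarrow> nat \<Rightarrow> relt) \<Rightarrow> nat \<Rightarrow> vect set" where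
  "T0k q a b M k = fixedpart q (Tsub q a b M) \<inter> mprod q (Ipow q (k - 1)) (Tsub q a b M)"

text \<open>D^(j) = (-1)^j sum_{i=0}^{q-1} (i choose j) gamma^(i-j)  (terms with i<j vanish)\<close>
definition Dop :: "nat \<Rightarrow> nat \<Rightarrow> relt" where
  "Dop q j = rsumn q (\<lambda>i. rscal q ((-1)^j * int (i choose j)) (rpow q (gam q) (i - j))) q"

definition bd_pair :: "nat \<Rightarrow> nat \<Rightarrow> nat \<Rightarrow> (nat \<Rightarrow> nat \<Rightarrow> relt) \<Rightarrow> nat \<Rightarrow> vect \<Rightarrow> vect \<Rightarrow> relt set" where
  "bd_pair q a b M k s t =
    (case (SOME (st, tt, xs, yt).
        st \<in> Ssub q a b M \<and> tt \<in> Tsub q a b M \<and>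
        smul q (rpow q (gm1 q) (k - 1)) st = s \<and> smul q (rpow q (gm1 q) (k - 1)) tt = t \<and>
        xs \<in> vcarrier q a \<and> yt \<in> vcarrier q b \<and>
        smul q (Dop q (k - 1)) xs = st \<and> smul q (Dop q (k - 1)) yt = tt)
     of (st, tt, xs, yt) \<Rightarrow> qcls q k (evp q b (ell q a b M xs) yt))"

text \<open>Bockstein pairing: s corresponds to the class of x in E_k^{0,1} with N x = s,
  t to the class of y in F_k^{0,1} with N y = t; beta^(k) sends x to l(x) in
  E_k^{k,2-k}, and the cup product gives l(x)(y) mod I^(k+1).\<close>
definition boc_pair :: "nat \<Rightarrow> nat \<Rightarrow> nat \<Rightarrow> (nat \<Rightarrow> nat \<Rightarrow> relt) \<Rightarrow> nat \<Rightarrow> vect \<Rightarrow> vect \<Rightarrow> relt set" where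
  "boc_pair q a b M k s t =
    (case (SOME (x, y).
        x \<in> vcarrier q a \<and> ell q a b M x \<in> mprod q (Ipow q k) (vcarrier q b) \<and>
        smul q (Nrm q) x = s \<and>
        y \<in> vcarrier q b \<and> ellstar q a b M y \<in> mprod q (Ipow q k) (vcarrier q a) \<and>
        smul q (Nrm q) y = t)
     of (x, y) \<Rightarrow> qcls q k (evp q b (ell q a b M x) y))"

end

theory Submission
  imports Defs "HOL-Algebra.Ring"
begin

text \<open>Write \<open>q = p\<^sup>n\<close> and \<open>u = \<gamma> - 1\<close>. The powers of the augmentation ideal are principal,
  \<open>I\<^sup>k = u\<^sup>k R\<close>; the annihilator of \<open>u\<close> is \<open>N R\<close> and that of \<open>N\<close> is \<open>I\<close>. Pascal's rule gives
  \<open>u D\<^sup>(\<^sup>j\<^sup>+\<^sup>1\<^sup>) = D\<^sup>(\<^sup>j\<^sup>)\<close> as long as \<open>q\<close> divides \<open>(q choose j+1)\<close>, which holds for \<open>j + 1 < p\<close>;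
  hence \<open>u\<^sup>j D\<^sup>(\<^sup>j\<^sup>) = N\<close>, \<open>Ann(u\<^sup>j\<^sup>+\<^sup>1) = D\<^sup>(\<^sup>j\<^sup>) R\<close> and \<open>Ann(D\<^sup>(\<^sup>j\<^sup>)) = u\<^sup>j\<^sup>+\<^sup>1 R\<close> for \<open>j < p\<close>.

  Consequently, if \<open>s = u\<^sup>k\<^sup>-\<^sup>1 D\<^sup>(\<^sup>k\<^sup>-\<^sup>1\<^sup>) x\<^sub>s\<close> as in the Bertolini--Darmon construction,
  then \<open>N x\<^sub>s = s\<close>, and \<open>D\<^sup>(\<^sup>k\<^sup>-\<^sup>1\<^sup>) \<ell>(x\<^sub>s) = \<ell>(D\<^sup>(\<^sup>k\<^sup>-\<^sup>1\<^sup>) x\<^sub>s) = 0\<close> forces \<open>\<ell>(x\<^sub>s) \<in> I\<^sup>k Y\<^sup>*\<close>: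
  \<open>x\<^sub>s\<close> is an admissible lift for the Bockstein pairing, and likewise \<open>y\<^sub>t\<close>. Finally the class of
  \<open>\<ell>(x)(y)\<close> modulo \<open>I\<^sup>k\<^sup>+\<^sup>1\<close> does not depend on the lifts: lifts with the same norm differ by
  multiples \<open>u z\<close>, \<open>u w\<close>, and the corrections \<open>u \<ell>(x)(w)\<close> and \<open>u \<ell>\<^sup>*(y)(z)\<close> lie in
  \<open>I\<^sup>k\<^sup>+\<^sup>1\<close> because \<open>\<ell>(x)\<close> and \<open>\<ell>\<^sup>*(y)\<close> have coefficients in \<open>I\<^sup>k\<close>.\<close>

declare rsumn.simps [simp del]

lemma sum_mod_cong:
  assumes "\<And>j. j \<in> A \<Longrightarrow> f j mod m = g j mod (m::int)"
  shows "sum f A mod m = sum g A mod m"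
proof -
  have "sum f A mod m = (\<Sum>j\<in>A. f j mod m) mod m" by (simp add: mod_sum_eq)
  also have "\<dots> = (\<Sum>j\<in>A. g j mod m) mod m" using assms by (simp cong: sum.cong)
  also have "\<dots> = sum g A mod m" by (simp add: mod_sum_eq)
  finally show ?thesis .
qed

section \<open>The group ring as a commutative ring\<close>

locale cyclic_group_ring =
  fixes q :: nat
  assumes q_gt_1: "1 < q"
begin

lemma q_pos: "0 < q"
  using q_gt_1 by simp

lemma one_mod_q: "1 mod int q = 1"
  using q_gt_1 by simp

definition cyc_diff :: "nat \<Rightarrow> nat \<Rightarrow> nat" where
  "cyc_diff i j = (i + q - j) mod q"

lemma cyc_diff_less: "cyc_diff i j < q"
  using q_pos by (simp add: cyc_diff_def)

lemma cyc_diff_eq: "i < q \<Longrightarrow> j < q \<Longrightarrow> cyc_diff i j = (if j \<le> i then i - j else i + q - j)"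
  by (simp add: cyc_diff_def mod_if)

lemma cyc_diff_0: "i < q \<Longrightarrow> cyc_diff i 0 = i"
  by (simp add: cyc_diff_def)

lemma cyc_diff_add_mod: "m < q \<Longrightarrow> l < q \<Longrightarrow> cyc_diff ((m + l) mod q) l = m"
  by (simp add: cyc_diff_eq mod_if cyc_diff_less split: if_split; arith)

lemma add_mod_cyc_diff: "j < q \<Longrightarrow> l < q \<Longrightarrow> (cyc_diff j l + l) mod q = j"
  by (simp add: cyc_diff_eq mod_if cyc_diff_less split: if_split; arith)

lemma cyc_diff_cyc_diff: "i < q \<Longrightarrow> j < q \<Longrightarrow> l < q \<Longrightarrow> cyc_diff (cyc_diff i l) (cyc_diff j l) = cyc_diff i j"
  by (simp add: cyc_diff_eq cyc_diff_less split: if_split; arith)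

lemma cyc_diff_cyc_diff_self: "i < q \<Longrightarrow> j < q \<Longrightarrow> cyc_diff i (cyc_diff i j) = j"
  by (simp add: cyc_diff_eq cyc_diff_less split: if_split; arith)

lemma sum_cyc_diff_reindex: "i < q \<Longrightarrow> (\<Sum>j<q. f (cyc_diff i j)) = (\<Sum>j<q. f j)"
  by (rule sum.reindex_bij_witness[where i="cyc_diff i" and j="cyc_diff i"])
     (auto simp: cyc_diff_cyc_diff_self cyc_diff_less)

lemma rcarrier_iff: "f \<in> rcarrier q \<longleftrightarrow> (\<forall>i<q. f i mod int q = f i) \<and> (\<forall>i. q \<le> i \<longrightarrow> f i = 0)"
proof -
  have "\<And>x. (0 \<le> x \<and> x < int q) \<longleftrightarrow> x mod int q = x"
    using q_pos by (metis mod_pos_pos_trivial of_nat_0_less_iff pos_mod_bound pos_mod_sign)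
  then show ?thesis unfolding rcarrier_def by auto
qed

lemma rcarrierI:
  "(\<And>i. i < q \<Longrightarrow> f i mod int q = f i) \<Longrightarrow> (\<And>i. q \<le> i \<Longrightarrow> f i = 0) \<Longrightarrow> f \<in> rcarrier q"
  using rcarrier_iff by auto

lemma rcarrier_mod: "f \<in> rcarrier q \<Longrightarrow> f i mod int q = f i"
  using rcarrier_iff by (cases "i < q") auto

lemma rcarrier_outside: "f \<in> rcarrier q \<Longrightarrow> q \<le> i \<Longrightarrow> f i = 0"
  unfolding rcarrier_def by auto

lemma rcarrier_eqI: "f \<in> rcarrier q \<Longrightarrow> g \<in> rcarrier q \<Longrightarrow> (\<And>i. i < q \<Longrightarrow> f i = g i) \<Longrightarrow> f = g"
  by (rule ext) (metis linorder_not_le rcarrier_outside)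

lemma radd_rcarrier [simp]: "radd q f g \<in> rcarrier q"
  by (rule rcarrierI) (auto simp: radd_def)

lemma rneg_rcarrier [simp]: "rneg q f \<in> rcarrier q"
  by (rule rcarrierI) (auto simp: rneg_def)

lemma rmul_rcarrier [simp]: "rmul q f g \<in> rcarrier q"
  by (rule rcarrierI) (auto simp: rmul_def)

lemma rzero_rcarrier [simp]: "rzero \<in> rcarrier q"
  by (rule rcarrierI) (auto simp: rzero_def)

lemma rone_rcarrier [simp]: "rone q \<in> rcarrier q"
  using q_pos by (intro rcarrierI) (auto simp: rone_def)

lemma gam_rcarrier [simp]: "gam q \<in> rcarrier q"
  by (rule rcarrierI) (auto simp: gam_def)

lemma Nrm_rcarrier [simp]: "Nrm q \<in> rcarrier q"
  by (rule rcarrierI) (auto simp: Nrm_def)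

lemma rmul_apply: "i < q \<Longrightarrow> rmul q f g i = (\<Sum>j<q. f j * g (cyc_diff i j)) mod int q"
  by (simp add: rmul_def cyc_diff_def)

lemma rmul_comm: "rmul q f g = rmul q g f"
proof (rule rcarrier_eqI[OF rmul_rcarrier rmul_rcarrier])
  fix i assume i: "i < q"
  have "(\<Sum>j<q. f j * g (cyc_diff i j)) = (\<Sum>j<q. g j * f (cyc_diff i j))"
    by (rule sum.reindex_bij_witness[where i="cyc_diff i" and j="cyc_diff i"])
       (auto simp: cyc_diff_cyc_diff_self cyc_diff_less i)
  then show "rmul q f g i = rmul q g f i" using i by (simp add: rmul_apply)
qed

lemma rmul_assoc:
  assumes "f \<in> rcarrier q" "g \<in> rcarrier q" "h \<in> rcarrier q"
  shows "rmul q (rmul q f g) h = rmul q f (rmul q g h)"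
proof (rule rcarrier_eqI[OF rmul_rcarrier rmul_rcarrier])
  fix i assume i: "i < q"
  have inner: "(\<Sum>j<q. g (cyc_diff j l) * h (cyc_diff i j)) = (\<Sum>m<q. g m * h (cyc_diff (cyc_diff i l) m))"
    if l: "l < q" for l
    by (rule sum.reindex_bij_witness[where i="\<lambda>m. (m + l) mod q" and j="\<lambda>j. cyc_diff j l"])
       (auto simp: cyc_diff_less cyc_diff_add_mod cyc_diff_cyc_diff add_mod_cyc_diff l i q_pos)
  have "rmul q (rmul q f g) h i = (\<Sum>j<q. rmul q f g j * h (cyc_diff i j)) mod int q"
    using i by (simp add: rmul_apply)
  also have "\<dots> = (\<Sum>j<q. (\<Sum>l<q. f l * g (cyc_diff j l)) * h (cyc_diff i j)) mod int q"
    by (rule sum_mod_cong) (simp add: rmul_apply mod_mult_left_eq)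
  also have "(\<Sum>j<q. (\<Sum>l<q. f l * g (cyc_diff j l)) * h (cyc_diff i j))
      = (\<Sum>j<q. \<Sum>l<q. f l * (g (cyc_diff j l) * h (cyc_diff i j)))"
    by (simp add: sum_distrib_right mult.assoc)
  also have "\<dots> = (\<Sum>l<q. f l * (\<Sum>j<q. g (cyc_diff j l) * h (cyc_diff i j)))"
    by (subst sum.swap) (simp add: sum_distrib_left)
  also have "\<dots> = (\<Sum>l<q. f l * (\<Sum>m<q. g m * h (cyc_diff (cyc_diff i l) m)))"
    by (simp add: inner)
  also have "\<dots> mod int q = (\<Sum>l<q. f l * rmul q g h (cyc_diff i l)) mod int q"
    by (rule sum_mod_cong) (simp add: rmul_apply cyc_diff_less mod_mult_right_eq)
  also have "\<dots> = rmul q f (rmul q g h) i"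
    using i by (simp add: rmul_apply)
  finally show "rmul q (rmul q f g) h i = rmul q f (rmul q g h) i" .
qed

lemma rmul_rone_left: "f \<in> rcarrier q \<Longrightarrow> rmul q (rone q) f = f"
proof (rule rcarrier_eqI[OF rmul_rcarrier])
  fix i assume f: "f \<in> rcarrier q" and i: "i < q"
  have "(\<Sum>j<q. rone q j * f (cyc_diff i j)) = (\<Sum>j<q. if j = 0 then f i else 0)"
    by (rule sum.cong) (auto simp: rone_def one_mod_q cyc_diff_0 i)
  also have "\<dots> = f i"
    using q_pos by simp
  finally show "rmul q (rone q) f i = f i"
    using i f by (simp add: rmul_apply rcarrier_mod)
qed

lemma radd_assoc: "radd q (radd q f g) h = radd q f (radd q g h)"
  by (rule ext) (simp add: radd_def mod_add_left_eq mod_add_right_eq add.assoc)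

lemma radd_comm: "radd q f g = radd q g f"
  by (rule ext) (simp add: radd_def add.commute)

lemma radd_rzero_left: "f \<in> rcarrier q \<Longrightarrow> radd q rzero f = f"
  by (rule ext) (auto simp: radd_def rzero_def rcarrier_mod rcarrier_outside)

lemma radd_rneg_left: "radd q (rneg q f) f = rzero"
  by (rule ext) (simp add: radd_def rneg_def rzero_def mod_add_left_eq)

lemma rmul_radd_distrib: "rmul q (radd q f g) h = radd q (rmul q f h) (rmul q g h)"
proof (rule rcarrier_eqI[OF rmul_rcarrier radd_rcarrier])
  fix i assume i: "i < q"
  have "rmul q (radd q f g) h i = (\<Sum>j<q. (f j + g j) * h (cyc_diff i j)) mod int q"
    unfolding rmul_apply[OF i] by (rule sum_mod_cong) (simp add: radd_def mod_mult_left_eq)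
  also have "\<dots> = ((\<Sum>j<q. f j * h (cyc_diff i j)) mod int q + (\<Sum>j<q. g j * h (cyc_diff i j)) mod int q) mod int q"
    by (simp add: sum.distrib distrib_right mod_add_eq)
  also have "\<dots> = radd q (rmul q f h) (rmul q g h) i"
    using i by (simp add: radd_def rmul_apply)
  finally show "rmul q (radd q f g) h i = radd q (rmul q f h) (rmul q g h) i" .
qed

definition GR :: "relt ring" where
  "GR = \<lparr>carrier = rcarrier q, mult = rmul q, one = rone q, zero = rzero, add = radd q\<rparr>"

lemma GR_carrier [simp]: "carrier GR = rcarrier q"
  by (simp add: GR_def)

lemma GR_simps: "mult GR = rmul q" "one GR = rone q" "zero GR = rzero" "add GR = radd q"
  by (simp_all add: GR_def)

lemma cring_GR: "cring GR"
proof (rule cringI)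
  show "abelian_group GR"
  proof (rule abelian_groupI)
    show "\<exists>y\<in>carrier GR. y \<oplus>\<^bsub>GR\<^esub> x = \<zero>\<^bsub>GR\<^esub>" for x
      using radd_rneg_left[of x] rneg_rcarrier[of x] by (auto simp: GR_simps)
  qed (auto simp: GR_simps radd_assoc radd_rzero_left intro: radd_comm)
  show "comm_monoid GR"
    by (rule comm_monoidI) (auto simp: GR_simps rmul_assoc rmul_rone_left intro: rmul_comm)
qed (simp add: GR_simps rmul_radd_distrib)

end

sublocale cyclic_group_ring \<subseteq> R: cring GR
  by (rule cring_GR)

context cyclic_group_ring
begin

abbreviation GR_mult (infixl "\<star>" 70) where "x \<star> y \<equiv> x \<otimes>\<^bsub>GR\<^esub> y"
abbreviation GR_add (infixl "\<oplus>\<oplus>" 65) where "x \<oplus>\<oplus> y \<equiv> x \<oplus>\<^bsub>GR\<^esub> y"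
abbreviation upow where "upow k \<equiv> gm1 q [^]\<^bsub>GR\<^esub> (k::nat)"

lemma GR_mult_eq: "x \<star> y = rmul q x y"
  by (simp add: GR_simps)

lemma a_inv_eq_rneg: "f \<in> rcarrier q \<Longrightarrow> \<ominus>\<^bsub>GR\<^esub> f = rneg q f"
  using R.minus_equality[of "rneg q f" f] radd_rneg_left[of f] by (simp add: GR_simps)

lemma GR_closed [simp]:
  "\<one>\<^bsub>GR\<^esub> \<in> rcarrier q" "\<zero>\<^bsub>GR\<^esub> \<in> rcarrier q" "x \<star> y \<in> rcarrier q" "x \<oplus>\<oplus> y \<in> rcarrier q"
  "x \<ominus>\<^bsub>GR\<^esub> y \<in> rcarrier q"
  by (simp_all add: GR_simps a_minus_def)

lemma GR_inv_closed [simp]: "x \<in> rcarrier q \<Longrightarrow> \<ominus>\<^bsub>GR\<^esub> x \<in> rcarrier q"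
  by (simp add: a_inv_eq_rneg)

lemma GR_pow_closed [simp]: "x \<in> rcarrier q \<Longrightarrow> x [^]\<^bsub>GR\<^esub> (n::nat) \<in> rcarrier q"
  using R.nat_pow_closed by simp

lemma rpow_eq: "rpow q f m = f [^]\<^bsub>GR\<^esub> m"
  by (induction m) (simp_all add: GR_simps)

section \<open>The augmentation ideal and the elements \<open>D\<^sup>(\<^sup>j\<^sup>)\<close>\<close>

lemma gam_apply: "j < q \<Longrightarrow> gam q j = (if j = 1 then 1 else 0)"
  using q_gt_1 by (simp add: gam_def one_mod_q)

lemma gam_rmul_apply: "f \<in> rcarrier q \<Longrightarrow> i < q \<Longrightarrow> rmul q (gam q) f i = f (cyc_diff i 1)"
proof -
  assume f: "f \<in> rcarrier q" and i: "i < q"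
  have "(\<Sum>j<q. gam q j * f (cyc_diff i j)) = (\<Sum>j<q. if j = 1 then f (cyc_diff i 1) else 0)"
    by (rule sum.cong) (auto simp: gam_apply)
  also have "\<dots> = f (cyc_diff i 1)"
    using q_gt_1 by simp
  finally show ?thesis
    using i f by (simp add: rmul_apply rcarrier_mod)
qed

lemma gm1_eq: "gm1 q = gam q \<ominus>\<^bsub>GR\<^esub> \<one>\<^bsub>GR\<^esub>"
  by (simp add: gm1_def a_minus_def a_inv_eq_rneg GR_simps)

lemma gm1_rcarrier [simp]: "gm1 q \<in> rcarrier q"
  by (simp add: gm1_def)

lemma gm1_mult: "f \<in> rcarrier q \<Longrightarrow> gm1 q \<star> f = gam q \<star> f \<ominus>\<^bsub>GR\<^esub> f"
  by (simp add: gm1_eq R.l_minus R.l_distr a_minus_def)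

lemma gm1_rmul_apply: "f \<in> rcarrier q \<Longrightarrow> i < q \<Longrightarrow> rmul q (gm1 q) f i = (f (cyc_diff i 1) - f i) mod int q"
  by (simp add: GR_mult_eq[symmetric] gm1_mult a_minus_def a_inv_eq_rneg)
     (simp add: GR_simps radd_def rneg_def gam_rmul_apply cyc_diff_less mod_add_right_eq)

lemma Nrm_rmul_apply: "i < q \<Longrightarrow> rmul q (Nrm q) f i = (\<Sum>j<q. f j) mod int q"
proof -
  assume i: "i < q"
  have "(\<Sum>j<q. Nrm q j * f (cyc_diff i j)) mod int q = (\<Sum>j<q. f (cyc_diff i j)) mod int q"
    by (rule sum_mod_cong) (simp add: Nrm_def one_mod_q)
  then show ?thesis
    using i by (simp add: rmul_apply sum_cyc_diff_reindex)
qed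

lemma gm1_augI: "gm1 q \<in> augI q"
proof -
  have "(\<Sum>i<q. gm1 q i) mod int q = (\<Sum>i<q. gam q i - rone q i) mod int q"
    by (rule sum_mod_cong) (simp add: gm1_def radd_def rneg_def mod_add_right_eq)
  also have "(\<Sum>i<q. gam q i - rone q i) = (\<Sum>i<q. gam q i) - (\<Sum>i<q. rone q i)"
    by (simp add: sum_subtractf)
  also have "(\<Sum>i<q. gam q i) = (\<Sum>i<q. if i = 1 then 1 else 0)"
    by (rule sum.cong) (auto simp: gam_apply)
  also have "(\<Sum>i<q. rone q i) = 1"
    using q_pos by (simp add: rone_def one_mod_q)
  finally show ?thesis
    using q_gt_1 by (simp add: augI_def)
qed

lemma augI_gm1_multiple:
  assumes f: "f \<in> augI q"
  shows "\<exists>g\<in>rcarrier q. f = gm1 q \<star> g"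
proof -
  have frc: "f \<in> rcarrier q" and fs: "(\<Sum>i<q. f i) mod int q = 0"
    using f by (auto simp: augI_def)
  define g where "g = (\<lambda>e. if e < q then (- (\<Sum>m\<le>e. f m)) mod int q else 0)"
  have grc: "g \<in> rcarrier q"
    by (rule rcarrierI) (auto simp: g_def)
  have "f = rmul q (gm1 q) g"
  proof (rule rcarrier_eqI[OF frc rmul_rcarrier])
    fix e assume e: "e < q"
    show "f e = rmul q (gm1 q) g e"
    proof (cases e)
      case 0
      have "cyc_diff 0 1 = q - 1" and "{..q - 1} = {..<q}"
        using q_gt_1 by (auto simp: cyc_diff_eq)
      then have "rmul q (gm1 q) g e = ((- (\<Sum>m<q. f m)) mod int q - (- f 0) mod int q) mod int q"
        using gm1_rmul_apply[OF grc e] 0 q_pos by (simp add: g_def)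
      also have "\<dots> = ((- (\<Sum>m<q. f m)) mod int q + f 0) mod int q"
        by (simp add: mod_diff_eq mod_add_left_eq)
      also have "(- (\<Sum>m<q. f m)) mod int q = 0"
        using fs by (simp add: zmod_zminus1_eq_if)
      finally show ?thesis
        using 0 frc by (simp add: rcarrier_mod)
    next
      case (Suc e')
      then have "cyc_diff e 1 = e'"
        using e by (simp add: cyc_diff_eq)
      then have "rmul q (gm1 q) g e = ((- (\<Sum>m\<le>e'. f m)) mod int q - (- (\<Sum>m\<le>Suc e'. f m)) mod int q) mod int q"
        using gm1_rmul_apply[OF grc e] Suc e by (simp add: g_def)
      also have "\<dots> = f e mod int q"
        by (simp add: mod_diff_eq Suc)
      finally show ?thesis
        using frc by (simp add: rcarrier_mod)
    qed
  qed
  then show ?thesis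
    using grc by (auto simp: GR_mult_eq)
qed

lemma ann_Nrm_augI:
  assumes "f \<in> rcarrier q" and "Nrm q \<star> f = \<zero>\<^bsub>GR\<^esub>"
  shows "f \<in> augI q"
proof -
  have "rmul q (Nrm q) f 0 = 0"
    using assms(2) by (simp add: GR_simps rzero_def)
  then show ?thesis
    using assms(1) q_pos Nrm_rmul_apply[of 0 f] by (simp add: augI_def)
qed

lemma ann_gm1:
  assumes f: "f \<in> rcarrier q" and z: "gm1 q \<star> f = \<zero>\<^bsub>GR\<^esub>"
  shows "\<exists>c\<in>rcarrier q. f = Nrm q \<star> c"
proof -
  have shift: "f (cyc_diff e 1) = f e" if e: "e < q" for e
  proof -
    have "(f (cyc_diff e 1) - f e) mod int q = 0"
      using z gm1_rmul_apply[OF f e] by (simp add: GR_simps rzero_def)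
    then show ?thesis
      using f by (metis mod_eq_dvd_iff dvd_eq_mod_eq_0 rcarrier_mod)
  qed
  have const: "e < q \<Longrightarrow> f e = f 0" for e
  proof (induction e)
    case (Suc e)
    have "cyc_diff (Suc e) 1 = e"
      using Suc.prems by (simp add: cyc_diff_eq)
    then show ?case
      using shift[OF Suc.prems] Suc by simp
  qed simp
  define c :: relt where "c = (\<lambda>i. if i = 0 then f 0 else 0)"
  have crc: "c \<in> rcarrier q"
    using f q_pos by (intro rcarrierI) (auto simp: c_def rcarrier_mod)
  have "f = rmul q (Nrm q) c"
  proof (rule rcarrier_eqI[OF f rmul_rcarrier])
    fix i assume i: "i < q"
    have "(\<Sum>j<q. c j) = f 0"
      using q_pos by (simp add: c_def)
    then show "f i = rmul q (Nrm q) c i"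
      using i const[OF i] f by (simp add: Nrm_rmul_apply rcarrier_mod)
  qed
  then show ?thesis
    using crc by (auto simp: GR_mult_eq)
qed

lemma iprod_augI_upow:
  assumes "x \<in> iprod q (augI q) {upow k \<star> c | c. c \<in> rcarrier q}"
  shows "x \<in> {upow (Suc k) \<star> c | c. c \<in> rcarrier q}"
  using assms
proof (induction rule: iprod.induct)
  case iprod_zero
  have "rzero = upow (Suc k) \<star> \<zero>\<^bsub>GR\<^esub>"
    using R.r_null[of "upow (Suc k)"] by (simp add: GR_simps(3))
  then show ?case
    using GR_closed(2) by blast
next
  case (iprod_mul a b)
  obtain a' where a': "a' \<in> rcarrier q" "a = gm1 q \<star> a'"
    using augI_gm1_multiple[OF iprod_mul(1)] by blast
  obtain b' where b': "b' \<in> rcarrier q" "b = upow k \<star> b'"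
    using iprod_mul(2) by blast
  have "rmul q a b = upow (Suc k) \<star> (a' \<star> b')"
    unfolding GR_mult_eq[symmetric] a' b' using a' b' by (simp add: R.m_ac)
  then show ?case
    using a' b' by auto
next
  case (iprod_add x y)
  obtain a' b' where "a' \<in> rcarrier q" "x = upow (Suc k) \<star> a'" "b' \<in> rcarrier q" "y = upow (Suc k) \<star> b'"
    using iprod_add(3,4) by blast
  then have "radd q x y = upow (Suc k) \<star> (a' \<oplus>\<oplus> b')" and "a' \<oplus>\<oplus> b' \<in> rcarrier q"
    by (simp_all add: R.r_distr GR_simps(4)[symmetric])
  then show ?case
    by blast
qed

lemma Ipow_eq: "Ipow q k = {upow k \<star> c | c. c \<in> rcarrier q}"
proof (induction k)
  case 0
  show ?case
    by (auto intro!: exI[of _ "_"])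
next
  case (Suc k)
  show ?case
  proof
    show "Ipow q (Suc k) \<subseteq> {upow (Suc k) \<star> c | c. c \<in> rcarrier q}"
      using Suc iprod_augI_upow by auto
    show "{upow (Suc k) \<star> c | c. c \<in> rcarrier q} \<subseteq> Ipow q (Suc k)"
    proof clarify
      fix c assume c: "c \<in> rcarrier q"
      have "upow (Suc k) \<star> c = rmul q (gm1 q) (upow k \<star> c)"
        using c by (simp add: GR_mult_eq[symmetric] R.m_ac)
      moreover have "upow k \<star> c \<in> Ipow q k"
        using Suc c by auto
      ultimately show "upow (Suc k) \<star> c \<in> Ipow q (Suc k)"
        using gm1_augI by (simp add: iprod.iprod_mul)
    qed
  qed
qed

lemma Ipow_iff: "x \<in> Ipow q k \<longleftrightarrow> (\<exists>c\<in>rcarrier q. x = upow k \<star> c)"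
  by (auto simp: Ipow_eq)

lemma Ipow_rcarrier: "x \<in> Ipow q k \<Longrightarrow> x \<in> rcarrier q"
  by (auto simp: Ipow_iff)

lemma upow_Ipow: "upow k \<in> Ipow q k"
  unfolding Ipow_iff by (auto intro!: bexI[of _ "\<one>\<^bsub>GR\<^esub>"])

lemma zero_Ipow: "\<zero>\<^bsub>GR\<^esub> \<in> Ipow q k"
  unfolding Ipow_iff by (auto intro!: bexI[of _ "\<zero>\<^bsub>GR\<^esub>"])

lemma Ipow_add: "x \<in> Ipow q k \<Longrightarrow> y \<in> Ipow q k \<Longrightarrow> x \<oplus>\<oplus> y \<in> Ipow q k"
  unfolding Ipow_iff by (auto simp: R.r_distr[symmetric] intro!: bexI[of _ "_ \<oplus>\<oplus> _"])

lemma Ipow_a_inv: "x \<in> Ipow q k \<Longrightarrow> \<ominus>\<^bsub>GR\<^esub> x \<in> Ipow q k"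
  unfolding Ipow_iff by (auto simp: R.r_minus[symmetric] intro!: bexI[of _ "\<ominus>\<^bsub>GR\<^esub> _"])

lemma Ipow_mult: "x \<in> Ipow q k \<Longrightarrow> r \<in> rcarrier q \<Longrightarrow> x \<star> r \<in> Ipow q k"
  unfolding Ipow_iff by (auto simp: R.m_assoc intro!: bexI[of _ "_ \<star> r"])

lemma gm1_mult_Ipow: "x \<in> Ipow q k \<Longrightarrow> gm1 q \<star> x \<in> Ipow q (Suc k)"
  unfolding Ipow_iff by (auto simp: R.m_ac)

lemma rpow_gam: "rpow q (gam q) m = (\<lambda>i. if i = m mod q then 1 else 0)"
proof (induction m)
  case 0
  show ?case
    by (rule ext) (simp add: rone_def one_mod_q)
next
  case (Suc m)
  have delta_rcarrier: "(\<lambda>i. if i = l mod q then 1 else 0) \<in> rcarrier q" for l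
    using mod_less_divisor[OF q_pos, of l] by (intro rcarrierI) (auto simp: one_mod_q)
  have "rpow q (gam q) (Suc m) = rmul q (gam q) (\<lambda>i. if i = m mod q then 1 else 0)"
    using Suc by (simp add: rmul_comm)
  also have "\<dots> = (\<lambda>i. if i = Suc m mod q then 1 else 0)"
  proof (rule rcarrier_eqI[OF rmul_rcarrier delta_rcarrier])
    fix i assume i: "i < q"
    have "(cyc_diff i 1 = m mod q) = (i = Suc m mod q)"
      using i q_gt_1 mod_less_divisor[OF q_pos, of m] by (auto simp: cyc_diff_eq mod_Suc)
    then show "rmul q (gam q) (\<lambda>i. if i = m mod q then 1 else 0) i = (if i = Suc m mod q then 1 else 0)"
      using i delta_rcarrier by (simp add: gam_rmul_apply)
  qed
  finally show ?case .
qed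

lemma rsumn_apply: "rsumn q F m = (\<lambda>i. if i < q then (\<Sum>l<m. F l i) mod int q else 0)"
  by (induction m) (auto simp: rsumn.simps rzero_def radd_def mod_add_left_eq)

lemma rsumn_rcarrier [simp]: "rsumn q F m \<in> rcarrier q"
  by (cases m) (simp_all add: rsumn.simps)

definition Dcoeff :: "nat \<Rightarrow> nat \<Rightarrow> int" where
  "Dcoeff j m = (-1) ^ j * int (m choose j)"

lemma Dcoeff_Suc: "Dcoeff (Suc j) (Suc m) = Dcoeff (Suc j) m - Dcoeff j m"
  by (simp add: Dcoeff_def algebra_simps)

lemma Dop_apply: "Dop q j = (\<lambda>e. if e + j < q then Dcoeff j (e + j) mod int q else 0)"
proof (rule ext)
  fix e
  show "Dop q j e = (if e + j < q then Dcoeff j (e + j) mod int q else 0)"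
  proof (cases "e < q")
    case False
    then show ?thesis
      by (simp add: Dop_def rsumn_apply)
  next
    case e: True
    have "Dop q j e = (\<Sum>i<q. rscal q (Dcoeff j i) (rpow q (gam q) (i - j)) e) mod int q"
      using e by (simp add: Dop_def rsumn_apply Dcoeff_def)
    also have "\<dots> = (\<Sum>i<q. if i = e + j then Dcoeff j i else 0) mod int q"
    proof (rule sum_mod_cong)
      fix i assume "i \<in> {..<q}"
      then have "j \<le> i \<Longrightarrow> (e = (i - j) mod q) = (i = e + j)"
        by auto
      then show "rscal q (Dcoeff j i) (rpow q (gam q) (i - j)) e mod int q
          = (if i = e + j then Dcoeff j i else 0) mod int q"
        using e by (cases "i < j") (auto simp: rscal_def rpow_gam Dcoeff_def binomial_eq_0)
    qed
    finally show ?thesis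
      by simp
  qed
qed

lemma Dop_rcarrier [simp]: "Dop q j \<in> rcarrier q"
  by (simp add: Dop_def)

lemma Dop_0: "Dop q 0 = Nrm q"
  by (rule ext) (simp add: Dop_apply Nrm_def Dcoeff_def)

text \<open>Pascal's rule turns multiplication by \<open>\<gamma> - 1\<close> into a shift of the coefficient
  sequences; the only term not covered by it is the wrap-around one, which carries the
  factor \<open>(q choose j+1)\<close>.\<close>

lemma gm1_rmul_Dop_Suc:
  assumes dvd: "int q dvd int (q choose Suc j)" and less: "Suc j < q"
  shows "rmul q (gm1 q) (Dop q (Suc j)) = Dop q j"
proof (rule rcarrier_eqI[OF rmul_rcarrier Dop_rcarrier])
  fix e assume e: "e < q"
  have shift: "rmul q (gm1 q) (Dop q (Suc j)) e = (Dop q (Suc j) (cyc_diff e 1) - Dop q (Suc j) e) mod int q"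
    by (rule gm1_rmul_apply[OF Dop_rcarrier e])
  show "rmul q (gm1 q) (Dop q (Suc j)) e = Dop q j e"
  proof (cases e)
    case 0
    have "cyc_diff 0 1 = q - 1"
      using q_gt_1 by (simp add: cyc_diff_eq)
    then show ?thesis
      using 0 less q_gt_1 unfolding shift by (simp add: Dop_apply Dcoeff_def mod_diff_right_eq mod_minus_eq)
  next
    case (Suc e')
    then have "cyc_diff e 1 = e'"
      using e by (simp add: cyc_diff_eq)
    moreover
    have "(Dop q (Suc j) e' - Dop q (Suc j) e) mod int q = Dop q j e"
    proof (cases "e + Suc j < q")
      case True
      then show ?thesis
        using Suc by (simp add: Dop_apply mod_diff_eq Dcoeff_Suc)
    next
      case outside: False
      show ?thesis
      proof (cases "e + Suc j = q")
        case True
        have "int q dvd Dcoeff (Suc j) (Suc (e' + Suc j))"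
          using dvd True Suc by (simp add: Dcoeff_def)
        then have "Dcoeff (Suc j) (e' + Suc j) mod int q = Dcoeff j (e + j) mod int q"
          using Suc by (simp add: Dcoeff_Suc mod_eq_dvd_iff)
        then show ?thesis
          using True Suc outside by (simp add: Dop_apply mod_diff_left_eq)
      next
        case False
        then show ?thesis
          using outside Suc by (simp add: Dop_apply)
      qed
    qed
    ultimately show ?thesis
      unfolding shift by simp
  qed
qed

definition binomials_vanish :: "nat \<Rightarrow> bool" where
  "binomials_vanish J \<longleftrightarrow> J < q \<and> (\<forall>j. 1 \<le> j \<longrightarrow> j \<le> J \<longrightarrow> int q dvd int (q choose j))"

lemma gm1_mult_Dop_Suc: "binomials_vanish J \<Longrightarrow> Suc j \<le> J \<Longrightarrow> gm1 q \<star> Dop q (Suc j) = Dop q j"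
  unfolding binomials_vanish_def GR_mult_eq by (rule gm1_rmul_Dop_Suc) auto

lemma upow_mult_Dop: "binomials_vanish J \<Longrightarrow> j \<le> J \<Longrightarrow> upow j \<star> Dop q j = Nrm q"
proof (induction j)
  case 0
  show ?case
    by (simp add: Dop_0)
next
  case (Suc j)
  have "upow (Suc j) \<star> Dop q (Suc j) = upow j \<star> (gm1 q \<star> Dop q (Suc j))"
    by (simp add: R.m_assoc)
  also have "\<dots> = upow j \<star> Dop q j"
    using gm1_mult_Dop_Suc[OF Suc.prems(1)] Suc.prems(2) by simp
  finally show ?case
    using Suc by simp
qed

lemma ann_upow_Suc:
  assumes vanish: "binomials_vanish J'"
  shows "J \<le> J' \<Longrightarrow> f \<in> rcarrier q \<Longrightarrow> upow (Suc J) \<star> f = \<zero>\<^bsub>GR\<^esub> \<Longrightarrow> \<exists>c\<in>rcarrier q. f = Dop q J \<star> c"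
proof (induction J arbitrary: f)
  case 0
  then show ?case
    using ann_gm1[of f] by (simp add: Dop_0)
next
  case (Suc J)
  note f = Suc.prems(2)
  have "upow (Suc J) \<star> (gm1 q \<star> f) = \<zero>\<^bsub>GR\<^esub>"
    using Suc.prems(3) f by (simp add: R.m_assoc)
  then obtain a where a: "a \<in> rcarrier q" "gm1 q \<star> f = Dop q J \<star> a"
    using Suc.IH[of "gm1 q \<star> f"] Suc.prems by auto
  have D: "Dop q J = gm1 q \<star> Dop q (Suc J)"
    using gm1_mult_Dop_Suc[OF vanish] Suc.prems by simp
  define g where "g = f \<ominus>\<^bsub>GR\<^esub> Dop q (Suc J) \<star> a"
  have "gm1 q \<star> g = gm1 q \<star> f \<ominus>\<^bsub>GR\<^esub> (gm1 q \<star> Dop q (Suc J)) \<star> a"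
    using f a by (simp add: g_def a_minus_def R.r_distr R.r_minus R.m_assoc)
  also have "\<dots> = \<zero>\<^bsub>GR\<^esub>"
    using a D by (simp add: a_minus_def R.r_neg)
  finally obtain b where b: "b \<in> rcarrier q" "g = Nrm q \<star> b"
    using ann_gm1[of g] by (auto simp: g_def)
  have N: "Nrm q = Dop q (Suc J) \<star> upow (Suc J)"
    using upow_mult_Dop[OF vanish, of "Suc J"] Suc.prems by (simp add: R.m_comm)
  have "f = g \<oplus>\<oplus> Dop q (Suc J) \<star> a"
    using f a by (simp add: g_def a_minus_def R.a_assoc R.l_neg)
  also have "\<dots> = Dop q (Suc J) \<star> (upow (Suc J) \<star> b \<oplus>\<oplus> a)"
    using a b by (simp add: N R.m_assoc R.r_distr)
  finally show ?case
    using a b by auto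
qed

lemma ann_Dop:
  assumes vanish: "binomials_vanish J'"
  shows "J \<le> J' \<Longrightarrow> f \<in> rcarrier q \<Longrightarrow> Dop q J \<star> f = \<zero>\<^bsub>GR\<^esub> \<Longrightarrow> \<exists>c\<in>rcarrier q. f = upow (Suc J) \<star> c"
proof (induction J arbitrary: f)
  case 0
  then have "f \<in> augI q"
    using ann_Nrm_augI[of f] by (simp add: Dop_0)
  then show ?case
    using augI_gm1_multiple by auto
next
  case (Suc J)
  note f = Suc.prems(2)
  have "Dop q J = gm1 q \<star> Dop q (Suc J)"
    using gm1_mult_Dop_Suc[OF vanish] Suc.prems(1) by simp
  then have "Dop q J \<star> f = gm1 q \<star> (Dop q (Suc J) \<star> f)"
    using f by (simp add: R.m_assoc)
  also have "\<dots> = \<zero>\<^bsub>GR\<^esub>"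
    using Suc.prems by simp
  finally obtain a where a: "a \<in> rcarrier q" "f = upow (Suc J) \<star> a"
    using Suc.IH[of f] Suc.prems by auto
  have "Nrm q \<star> a = Dop q (Suc J) \<star> f"
    using a upow_mult_Dop[OF vanish, of "Suc J"] Suc.prems(1) by (simp add: R.m_ac)
  then have "a \<in> augI q"
    using Suc.prems ann_Nrm_augI[OF a(1)] by simp
  then obtain b where "b \<in> rcarrier q" "a = gm1 q \<star> b"
    using augI_gm1_multiple by blast
  then show ?case
    using a by (auto simp: R.m_assoc)
qed

section \<open>Free modules and the map \<open>\<ell>\<close>\<close>

lemma rsumn_0: "rsumn q F 0 = \<zero>\<^bsub>GR\<^esub>"
  by (simp add: GR_simps rsumn.simps)

lemma rsumn_Suc: "rsumn q F (Suc m) = rsumn q F m \<oplus>\<oplus> F m"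
  by (simp add: GR_simps rsumn.simps)

lemma rsumn_cong: "(\<And>l. l < m \<Longrightarrow> F l = G l) \<Longrightarrow> rsumn q F m = rsumn q G m"
  by (induction m) (auto simp: rsumn_Suc rsumn_0)

lemma radd_rzero: "radd q rzero rzero = rzero"
  by (rule ext) (simp add: radd_def rzero_def)

lemma rsumn_rzero: "rsumn q (\<lambda>_. rzero) m = rzero"
  by (induction m) (simp_all add: rsumn.simps radd_rzero)

lemma rsumn_add:
  "(\<And>l. l < m \<Longrightarrow> F l \<in> rcarrier q) \<Longrightarrow> (\<And>l. l < m \<Longrightarrow> G l \<in> rcarrier q) \<Longrightarrow>
   rsumn q (\<lambda>l. F l \<oplus>\<oplus> G l) m = rsumn q F m \<oplus>\<oplus> rsumn q G m"
  by (induction m) (simp_all add: rsumn_0 rsumn_Suc R.a_ac)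

lemma rsumn_mult_left:
  "r \<in> rcarrier q \<Longrightarrow> (\<And>l. l < m \<Longrightarrow> F l \<in> rcarrier q) \<Longrightarrow>
   r \<star> rsumn q F m = rsumn q (\<lambda>l. r \<star> F l) m"
  by (induction m) (simp_all add: rsumn_0 rsumn_Suc R.r_distr)

lemma rsumn_mult_right:
  "r \<in> rcarrier q \<Longrightarrow> (\<And>l. l < m \<Longrightarrow> F l \<in> rcarrier q) \<Longrightarrow>
   rsumn q F m \<star> r = rsumn q (\<lambda>l. F l \<star> r) m"
  by (induction m) (simp_all add: rsumn_0 rsumn_Suc R.l_distr)

lemma rsumn_swap:
  "(\<And>i j. i < b \<Longrightarrow> j < a \<Longrightarrow> F i j \<in> rcarrier q) \<Longrightarrow>
   rsumn q (\<lambda>i. rsumn q (F i) a) b = rsumn q (\<lambda>j. rsumn q (\<lambda>i. F i j) b) a"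
proof (induction b)
  case 0
  show ?case
    by (induction a) (simp_all add: rsumn_Suc rsumn_0)
next
  case (Suc b)
  have "rsumn q (\<lambda>j. rsumn q (\<lambda>i. F i j) (Suc b)) a = rsumn q (\<lambda>j. rsumn q (\<lambda>i. F i j) b \<oplus>\<oplus> F b j) a"
    by (simp add: rsumn_Suc)
  also have "\<dots> = rsumn q (\<lambda>j. rsumn q (\<lambda>i. F i j) b) a \<oplus>\<oplus> rsumn q (F b) a"
    using Suc.prems by (intro rsumn_add) auto
  finally show ?case
    using Suc by (simp add: rsumn_Suc)
qed

lemma rsumn_Ipow: "(\<And>l. l < m \<Longrightarrow> F l \<in> Ipow q k) \<Longrightarrow> rsumn q F m \<in> Ipow q k"
  by (induction m) (auto simp: rsumn_0 rsumn_Suc zero_Ipow Ipow_add)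

definition matrix_over :: "nat \<Rightarrow> nat \<Rightarrow> (nat \<Rightarrow> nat \<Rightarrow> relt) \<Rightarrow> bool" where
  "matrix_over a b M \<longleftrightarrow> (\<forall>i<b. \<forall>j<a. M i j \<in> rcarrier q)"

lemma matrix_overD: "matrix_over a b M \<Longrightarrow> i < b \<Longrightarrow> j < a \<Longrightarrow> M i j \<in> rcarrier q"
  unfolding matrix_over_def by auto

lemma matrix_over_transpose: "matrix_over a b M \<Longrightarrow> matrix_over b a (\<lambda>j i. M i j)"
  unfolding matrix_over_def by auto

lemma ellstar_eq_ell_transpose: "ellstar q a b M = ell q b a (\<lambda>j i. M i j)"
  by (intro ext) (simp add: ellstar_def ell_def)

lemma Tsub_eq_Ssub_transpose: "Tsub q a b M = Ssub q b a (\<lambda>j i. M i j)"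
  by (simp add: Tsub_def Ssub_def ellstar_eq_ell_transpose)

lemma T0k_eq_S0k_transpose: "T0k q a b M k = S0k q b a (\<lambda>j i. M i j) k"
  by (simp add: T0k_def S0k_def Tsub_eq_Ssub_transpose)

lemma vcarrierI:
  "(\<And>j. j < m \<Longrightarrow> x j \<in> rcarrier q) \<Longrightarrow> (\<And>j. m \<le> j \<Longrightarrow> x j = rzero) \<Longrightarrow> x \<in> vcarrier q m"
  unfolding vcarrier_def by auto

lemma vcarrier_rcarrier: "x \<in> vcarrier q m \<Longrightarrow> x j \<in> rcarrier q"
  unfolding vcarrier_def by (cases "j < m") auto

lemma vcarrier_outside: "x \<in> vcarrier q m \<Longrightarrow> m \<le> j \<Longrightarrow> x j = rzero"
  unfolding vcarrier_def by auto

lemma vcarrier_choice: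
  assumes "\<And>j. j < m \<Longrightarrow> \<exists>c\<in>rcarrier q. P j c"
  shows "\<exists>x\<in>vcarrier q m. \<forall>j<m. P j (x j)"
proof -
  define x where "x = (\<lambda>j. if j < m then SOME c. c \<in> rcarrier q \<and> P j c else rzero)"
  have "x j \<in> rcarrier q \<and> P j (x j)" if "j < m" for j
    using someI_ex[OF assms[OF that, unfolded Bex_def]] that by (simp add: x_def)
  then show ?thesis
    by (intro bexI[of _ x]) (auto intro: vcarrierI simp: x_def)
qed

lemma rmul_rzero: "rmul q r rzero = rzero"
  by (rule ext) (simp add: rmul_def rzero_def)

lemma smul_eqI:
  assumes "x \<in> vcarrier q m" "w \<in> vcarrier q m" "\<And>j. j < m \<Longrightarrow> w j = r \<star> x j"
  shows "smul q r x = w"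
proof (rule ext)
  fix j
  show "smul q r x j = w j"
    using assms vcarrier_outside[of _ m j] by (cases "j < m") (simp_all add: smul_def GR_mult_eq rmul_rzero)
qed

lemma smul_vcarrier: "v \<in> vcarrier q m \<Longrightarrow> smul q r v \<in> vcarrier q m"
  by (rule vcarrierI) (auto simp: smul_def vcarrier_outside rmul_rzero)

lemma vadd_vcarrier: "v \<in> vcarrier q m \<Longrightarrow> w \<in> vcarrier q m \<Longrightarrow> vadd q v w \<in> vcarrier q m"
  by (rule vcarrierI) (auto simp: vadd_def vcarrier_outside radd_rzero)

lemma vzero_vcarrier: "vzero \<in> vcarrier q m"
  by (rule vcarrierI) (auto simp: vzero_def)

lemma smul_smul: "v \<in> vcarrier q m \<Longrightarrow> r \<in> rcarrier q \<Longrightarrow> c \<in> rcarrier q \<Longrightarrow>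
  smul q r (smul q c v) = smul q (r \<star> c) v"
  by (rule ext) (simp add: smul_def GR_mult_eq[symmetric] R.m_assoc vcarrier_rcarrier)

lemma smul_vadd: "v \<in> vcarrier q m \<Longrightarrow> w \<in> vcarrier q m \<Longrightarrow> r \<in> rcarrier q \<Longrightarrow>
  smul q r (vadd q v w) = vadd q (smul q r v) (smul q r w)"
  by (rule ext) (simp add: smul_def vadd_def GR_mult_eq[symmetric] GR_simps(4)[symmetric] R.r_distr vcarrier_rcarrier)

lemma ell_apply: "i < b \<Longrightarrow> ell q a b M x i = rsumn q (\<lambda>j. M i j \<star> x j) a"
  by (simp add: ell_def GR_mult_eq)

lemma ell_vcarrier: "ell q a b M x \<in> vcarrier q b"
  by (rule vcarrierI) (auto simp: ell_def)

lemma ell_smul: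
  assumes M: "matrix_over a b M" and x: "x \<in> vcarrier q a" and r: "r \<in> rcarrier q"
  shows "ell q a b M (smul q r x) = smul q r (ell q a b M x)"
proof (rule ext)
  fix i
  show "ell q a b M (smul q r x) i = smul q r (ell q a b M x) i"
  proof (cases "i < b")
    case True
    have "rsumn q (\<lambda>j. M i j \<star> smul q r x j) a = rsumn q (\<lambda>j. r \<star> (M i j \<star> x j)) a"
      by (rule rsumn_cong)
         (simp add: smul_def GR_mult_eq[symmetric] R.m_lcomm r matrix_overD[OF M True] vcarrier_rcarrier[OF x])
    also have "\<dots> = r \<star> rsumn q (\<lambda>j. M i j \<star> x j) a"
      by (rule rsumn_mult_left[symmetric]) (simp_all add: r)
    finally show ?thesis
      using True by (simp add: ell_apply smul_def GR_mult_eq)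
  next
    case False
    then show ?thesis
      by (simp add: ell_def smul_def rmul_rzero)
  qed
qed

lemma ell_vadd:
  assumes M: "matrix_over a b M" and x: "x \<in> vcarrier q a" and y: "y \<in> vcarrier q a"
  shows "ell q a b M (vadd q x y) = vadd q (ell q a b M x) (ell q a b M y)"
proof (rule ext)
  fix i
  show "ell q a b M (vadd q x y) i = vadd q (ell q a b M x) (ell q a b M y) i"
  proof (cases "i < b")
    case True
    have "rsumn q (\<lambda>j. M i j \<star> vadd q x y j) a = rsumn q (\<lambda>j. M i j \<star> x j \<oplus>\<oplus> M i j \<star> y j) a"
      by (rule rsumn_cong)
         (simp add: vadd_def GR_simps(4)[symmetric] R.r_distr matrix_overD[OF M True] vcarrier_rcarrier[OF x] vcarrier_rcarrier[OF y])
    also have "\<dots> = rsumn q (\<lambda>j. M i j \<star> x j) a \<oplus>\<oplus> rsumn q (\<lambda>j. M i j \<star> y j) a"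
      by (rule rsumn_add) simp_all
    finally show ?thesis
      using True by (simp add: ell_apply vadd_def GR_simps(4))
  next
    case False
    then show ?thesis
      by (simp add: ell_def vadd_def radd_rzero)
  qed
qed

lemma ell_vzero: "ell q a b M vzero = vzero"
  by (rule ext) (simp add: ell_def vzero_def rmul_rzero rsumn_rzero)

lemma Ssub_vzero: "vzero \<in> Ssub q a b M"
  by (simp add: Ssub_def vzero_vcarrier ell_vzero)

lemma Ssub_smul: "matrix_over a b M \<Longrightarrow> v \<in> Ssub q a b M \<Longrightarrow> r \<in> rcarrier q \<Longrightarrow> smul q r v \<in> Ssub q a b M"
  unfolding Ssub_def using ell_smul[of a b M v r] smul_vcarrier[of v a r]
  by (auto simp: smul_def vzero_def rmul_rzero)

lemma Ssub_vadd: "matrix_over a b M \<Longrightarrow> v \<in> Ssub q a b M \<Longrightarrow> w \<in> Ssub q a b M \<Longrightarrow> vadd q v w \<in> Ssub q a b M"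
  unfolding Ssub_def using ell_vadd[of a b M v w] vadd_vcarrier[of v a w]
  by (auto simp: vadd_def vzero_def radd_rzero)

lemma mprod_Ipow_vcarrier: "v \<in> mprod q (Ipow q k) (vcarrier q m) \<Longrightarrow> v i \<in> Ipow q k"
proof (induction rule: mprod.induct)
  case mprod_zero
  then show ?case
    using zero_Ipow by (simp add: vzero_def GR_simps)
next
  case (mprod_mul r v)
  then show ?case
    using Ipow_mult[of r k "v i"] by (simp add: smul_def GR_mult_eq vcarrier_rcarrier)
next
  case (mprod_add u w)
  then show ?case
    using Ipow_add[of "u i" k "w i"] by (simp add: vadd_def GR_simps)
qed

lemma mprod_Ipow_Ssub:
  assumes M: "matrix_over a b M"
  shows "s \<in> mprod q (Ipow q J) (Ssub q a b M) \<Longrightarrow> \<exists>w\<in>Ssub q a b M. s = smul q (upow J) w"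
proof (induction rule: mprod.induct)
  case mprod_zero
  have "vzero = smul q (upow J) vzero"
    by (simp add: smul_def vzero_def rmul_rzero)
  then show ?case
    using Ssub_vzero by blast
next
  case (mprod_mul r v)
  then obtain c where c: "c \<in> rcarrier q" "r = upow J \<star> c"
    by (auto simp: Ipow_iff)
  have "smul q r v = smul q (upow J) (smul q c v)"
    using c mprod_mul(2) smul_smul[of v a "upow J" c] by (simp add: Ssub_def)
  then show ?case
    using Ssub_smul[OF M mprod_mul(2) c(1)] by blast
next
  case (mprod_add u w)
  then obtain w1 w2 where w: "w1 \<in> Ssub q a b M" "u = smul q (upow J) w1"
      "w2 \<in> Ssub q a b M" "w = smul q (upow J) w2"
    by blast
  then have "vadd q u w = smul q (upow J) (vadd q w1 w2)"
    using smul_vadd[of w1 a w2 "upow J"] by (simp add: Ssub_def)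
  then show ?case
    using Ssub_vadd[OF M w(1,3)] by blast
qed

section \<open>The two pairings\<close>

lemma fixed_gm1_mult:
  assumes v: "v \<in> vcarrier q m" and fixed: "smul q (gam q) v = v"
  shows "gm1 q \<star> v j = \<zero>\<^bsub>GR\<^esub>"
proof -
  have "gam q \<star> v j = v j"
    using fun_cong[OF fixed, of j] by (simp add: smul_def GR_mult_eq)
  then show ?thesis
    using vcarrier_rcarrier[OF v] by (simp add: gm1_mult a_minus_def R.r_neg)
qed

lemma S0k_Dop_lift:
  assumes M: "matrix_over a b M" and vanish: "binomials_vanish J" and s: "s \<in> S0k q a b M (Suc J)"
  shows "\<exists>st xs. st \<in> Ssub q a b M \<and> smul q (rpow q (gm1 q) J) st = s \<and>
    xs \<in> vcarrier q a \<and> smul q (Dop q J) xs = st"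
proof -
  have sS: "s \<in> Ssub q a b M" and fixed: "smul q (gam q) s = s"
    and "s \<in> mprod q (Ipow q J) (Ssub q a b M)"
    using s by (auto simp: S0k_def fixedpart_def)
  then obtain w where w: "w \<in> Ssub q a b M" "s = smul q (upow J) w"
    using mprod_Ipow_Ssub[OF M] by blast
  have wv: "w \<in> vcarrier q a" and sv: "s \<in> vcarrier q a"
    using w sS by (simp_all add: Ssub_def)
  have "s j = upow J \<star> w j" for j
    using w by (simp add: smul_def GR_mult_eq)
  then have "upow (Suc J) \<star> w j = gm1 q \<star> s j" for j
    using vcarrier_rcarrier[OF wv] by (simp add: R.m_ac)
  then have "upow (Suc J) \<star> w j = \<zero>\<^bsub>GR\<^esub>" for j
    using fixed_gm1_mult[OF sv fixed] by simp
  then have "\<exists>c\<in>rcarrier q. w j = Dop q J \<star> c" for j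
    using ann_upow_Suc[OF vanish, of J "w j"] vcarrier_rcarrier[OF wv] by auto
  then obtain xs where xs: "xs \<in> vcarrier q a" "\<forall>j<a. w j = Dop q J \<star> xs j"
    using vcarrier_choice[of a "\<lambda>j c. w j = Dop q J \<star> c"] by blast
  then have "smul q (Dop q J) xs = w"
    by (intro smul_eqI[OF xs(1) wv]) auto
  then show ?thesis
    using w xs by (auto simp: rpow_eq)
qed

text \<open>A Bockstein lift of \<open>s\<close> is a representative \<open>x\<close> of the class in \<open>E\<^sub>k\<^sup>0\<^sup>,\<^sup>1\<close>
  that corresponds to \<open>s\<close> under \<open>x \<mapsto> N x\<close>.\<close>

definition boc_lift :: "nat \<Rightarrow> nat \<Rightarrow> (nat \<Rightarrow> nat \<Rightarrow> relt) \<Rightarrow> nat \<Rightarrow> vect \<Rightarrow> vect \<Rightarrow> bool" where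
  "boc_lift a b M k s x \<longleftrightarrow>
    x \<in> vcarrier q a \<and> ell q a b M x \<in> mprod q (Ipow q k) (vcarrier q b) \<and> smul q (Nrm q) x = s"

lemma Dop_lift_boc_lift:
  assumes M: "matrix_over a b M" and vanish: "binomials_vanish J"
    and st: "st \<in> Ssub q a b M" and s: "smul q (rpow q (gm1 q) J) st = s"
    and xs: "xs \<in> vcarrier q a" and xs_st: "smul q (Dop q J) xs = st"
  shows "boc_lift a b M (Suc J) s xs"
proof -
  have "smul q (Nrm q) xs = smul q (upow J) (smul q (Dop q J) xs)"
    using smul_smul[OF xs, of "upow J" "Dop q J"] upow_mult_Dop[OF vanish, of J] by simp
  then have Nxs: "smul q (Nrm q) xs = s"
    using s xs_st by (simp add: rpow_eq)
  have ell0: "smul q (Dop q J) (ell q a b M xs) = vzero"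
    using ell_smul[OF M xs, of "Dop q J"] xs_st st by (simp add: Ssub_def)
  have "Dop q J \<star> ell q a b M xs i = \<zero>\<^bsub>GR\<^esub>" for i
    using fun_cong[OF ell0, of i] by (simp add: smul_def vzero_def GR_mult_eq GR_simps)
  then have "\<exists>c\<in>rcarrier q. ell q a b M xs i = upow (Suc J) \<star> c" for i
    using ann_Dop[OF vanish, of J "ell q a b M xs i"] vcarrier_rcarrier[OF ell_vcarrier] by auto
  then obtain c where c: "c \<in> vcarrier q b" "\<forall>i<b. ell q a b M xs i = upow (Suc J) \<star> c i"
    using vcarrier_choice[of b "\<lambda>i c. ell q a b M xs i = upow (Suc J) \<star> c"] by blast
  then have "ell q a b M xs = smul q (upow (Suc J)) c"
    by (intro smul_eqI[OF c(1) ell_vcarrier, symmetric]) auto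
  moreover have "smul q (upow (Suc J)) c \<in> mprod q (Ipow q (Suc J)) (vcarrier q b)"
    by (rule mprod.mprod_mul[OF upow_Ipow c(1)])
  ultimately have "ell q a b M xs \<in> mprod q (Ipow q (Suc J)) (vcarrier q b)"
    by (simp only:)
  then show ?thesis
    using Nxs xs by (simp add: boc_lift_def)
qed

lemma Nrm_mult_eq_imp:
  assumes f: "f \<in> rcarrier q" and g: "g \<in> rcarrier q" and eq: "Nrm q \<star> f = Nrm q \<star> g"
  shows "\<exists>z\<in>rcarrier q. f = g \<oplus>\<oplus> gm1 q \<star> z"
proof -
  have "Nrm q \<star> (f \<ominus>\<^bsub>GR\<^esub> g) = \<zero>\<^bsub>GR\<^esub>"
    using f g eq by (simp add: a_minus_def R.r_distr R.r_minus R.r_neg)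
  then obtain z where z: "z \<in> rcarrier q" "f \<ominus>\<^bsub>GR\<^esub> g = gm1 q \<star> z"
    using ann_Nrm_augI augI_gm1_multiple by (meson GR_closed(5))
  have "f = g \<oplus>\<oplus> (f \<ominus>\<^bsub>GR\<^esub> g)"
    using f g by (simp add: a_minus_def R.a_ac R.r_neg)
  then show ?thesis
    using z by auto
qed

lemma smul_Nrm_eq_imp:
  assumes x: "x \<in> vcarrier q m" and x': "x' \<in> vcarrier q m" and eq: "smul q (Nrm q) x = smul q (Nrm q) x'"
  shows "\<exists>z\<in>vcarrier q m. \<forall>j<m. x j = x' j \<oplus>\<oplus> gm1 q \<star> z j"
proof (rule vcarrier_choice)
  fix j
  show "\<exists>z\<in>rcarrier q. x j = x' j \<oplus>\<oplus> gm1 q \<star> z"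
    using Nrm_mult_eq_imp[OF vcarrier_rcarrier[OF x] vcarrier_rcarrier[OF x']] fun_cong[OF eq, of j]
    by (simp add: smul_def GR_mult_eq)
qed

lemma rsumn_add_gm1:
  "(\<And>l. l < m \<Longrightarrow> A l \<in> rcarrier q) \<Longrightarrow> (\<And>l. l < m \<Longrightarrow> B l \<in> rcarrier q) \<Longrightarrow>
   rsumn q (\<lambda>l. A l \<oplus>\<oplus> gm1 q \<star> B l) m = rsumn q A m \<oplus>\<oplus> gm1 q \<star> rsumn q B m"
  by (simp add: rsumn_add rsumn_mult_left)

lemma ell_add_gm1:
  assumes M: "matrix_over a b M" and x': "x' \<in> vcarrier q a" and z: "z \<in> vcarrier q a"
    and x: "\<forall>j<a. x j = x' j \<oplus>\<oplus> gm1 q \<star> z j" and i: "i < b"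
  shows "ell q a b M x i = ell q a b M x' i \<oplus>\<oplus> gm1 q \<star> ell q a b M z i"
proof -
  have "rsumn q (\<lambda>j. M i j \<star> x j) a = rsumn q (\<lambda>j. M i j \<star> x' j \<oplus>\<oplus> gm1 q \<star> (M i j \<star> z j)) a"
    by (rule rsumn_cong)
       (simp add: x R.r_distr R.m_lcomm matrix_overD[OF M i] vcarrier_rcarrier[OF x'] vcarrier_rcarrier[OF z])
  then show ?thesis
    using i by (simp add: ell_apply rsumn_add_gm1)
qed

lemma evp_eq: "evp q m f y = rsumn q (\<lambda>i. f i \<star> y i) m"
  by (simp add: evp_def GR_mult_eq)

lemma evp_rcarrier [simp]: "evp q m f y \<in> rcarrier q"
  by (simp add: evp_def)

lemma evp_add_gm1_left:
  assumes "\<forall>i<m. f i = g i \<oplus>\<oplus> gm1 q \<star> h i"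
    and "\<And>i. g i \<in> rcarrier q" "\<And>i. h i \<in> rcarrier q" "\<And>i. y i \<in> rcarrier q"
  shows "evp q m f y = evp q m g y \<oplus>\<oplus> gm1 q \<star> evp q m h y"
proof -
  have "evp q m f y = rsumn q (\<lambda>i. g i \<star> y i \<oplus>\<oplus> gm1 q \<star> (h i \<star> y i)) m"
    unfolding evp_eq by (rule rsumn_cong) (simp add: assms R.l_distr R.m_assoc)
  then show ?thesis
    by (simp add: evp_eq rsumn_add_gm1)
qed

lemma evp_add_gm1_right:
  assumes "\<forall>i<m. y i = y' i \<oplus>\<oplus> gm1 q \<star> w i"
    and "\<And>i. f i \<in> rcarrier q" "\<And>i. y' i \<in> rcarrier q" "\<And>i. w i \<in> rcarrier q"
  shows "evp q m f y = evp q m f y' \<oplus>\<oplus> gm1 q \<star> evp q m f w"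
proof -
  have "evp q m f y = rsumn q (\<lambda>i. f i \<star> y' i \<oplus>\<oplus> gm1 q \<star> (f i \<star> w i)) m"
    unfolding evp_eq by (rule rsumn_cong) (simp add: assms R.r_distr R.m_lcomm)
  then show ?thesis
    by (simp add: evp_eq rsumn_add_gm1)
qed

lemma evp_Ipow: "(\<And>i. i < m \<Longrightarrow> f i \<in> Ipow q k) \<Longrightarrow> (\<And>i. y i \<in> rcarrier q) \<Longrightarrow> evp q m f y \<in> Ipow q k"
  unfolding evp_eq by (rule rsumn_Ipow) (simp add: Ipow_mult)

lemma evp_ell_ellstar:
  assumes M: "matrix_over a b M" and x: "x \<in> vcarrier q a" and y: "y \<in> vcarrier q b"
  shows "evp q b (ell q a b M x) y = evp q a (ellstar q a b M y) x"
proof -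
  have "evp q b (ell q a b M x) y = rsumn q (\<lambda>i. rsumn q (\<lambda>j. M i j \<star> x j \<star> y i) a) b"
    unfolding evp_eq by (rule rsumn_cong) (simp add: ell_apply rsumn_mult_right vcarrier_rcarrier[OF y])
  also have "\<dots> = rsumn q (\<lambda>j. rsumn q (\<lambda>i. M i j \<star> x j \<star> y i) b) a"
    by (rule rsumn_swap) simp
  also have "\<dots> = rsumn q (\<lambda>j. rsumn q (\<lambda>i. M i j \<star> y i) b \<star> x j) a"
  proof (rule rsumn_cong)
    fix j assume j: "j < a"
    have "rsumn q (\<lambda>i. M i j \<star> x j \<star> y i) b = rsumn q (\<lambda>i. M i j \<star> y i \<star> x j) b"
      by (rule rsumn_cong) (simp add: R.m_ac matrix_overD[OF M _ j] vcarrier_rcarrier[OF x] vcarrier_rcarrier[OF y])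
    then show "rsumn q (\<lambda>i. M i j \<star> x j \<star> y i) b = rsumn q (\<lambda>i. M i j \<star> y i) b \<star> x j"
      by (simp add: rsumn_mult_right vcarrier_rcarrier[OF x])
  qed
  also have "\<dots> = evp q a (ellstar q a b M y) x"
    unfolding evp_eq by (rule rsumn_cong) (simp add: ellstar_def GR_mult_eq)
  finally show ?thesis .
qed

lemma qcls_add_Ipow:
  assumes B: "B \<in> rcarrier q" and d: "d \<in> Ipow q (Suc k)"
  shows "qcls q k (B \<oplus>\<oplus> d) = qcls q k B"
proof -
  have drc: "d \<in> rcarrier q"
    using Ipow_rcarrier[OF d] .
  have "B \<oplus>\<oplus> d \<ominus>\<^bsub>GR\<^esub> v \<in> Ipow q (Suc k) \<longleftrightarrow> B \<ominus>\<^bsub>GR\<^esub> v \<in> Ipow q (Suc k)"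
    if v: "v \<in> rcarrier q" for v
  proof
    assume "B \<oplus>\<oplus> d \<ominus>\<^bsub>GR\<^esub> v \<in> Ipow q (Suc k)"
    moreover have "B \<ominus>\<^bsub>GR\<^esub> v = (B \<oplus>\<oplus> d \<ominus>\<^bsub>GR\<^esub> v) \<oplus>\<oplus> \<ominus>\<^bsub>GR\<^esub> d"
      using B v drc by (simp add: a_minus_def R.a_ac R.r_neg2)
    ultimately show "B \<ominus>\<^bsub>GR\<^esub> v \<in> Ipow q (Suc k)"
      using Ipow_add[OF _ Ipow_a_inv[OF d]] by simp
  next
    assume "B \<ominus>\<^bsub>GR\<^esub> v \<in> Ipow q (Suc k)"
    moreover have "B \<oplus>\<oplus> d \<ominus>\<^bsub>GR\<^esub> v = (B \<ominus>\<^bsub>GR\<^esub> v) \<oplus>\<oplus> d"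
      using B v drc by (simp add: a_minus_def R.a_ac)
    ultimately show "B \<oplus>\<oplus> d \<ominus>\<^bsub>GR\<^esub> v \<in> Ipow q (Suc k)"
      using Ipow_add[OF _ d] by simp
  qed
  moreover have "radd q A (rneg q v) = A \<ominus>\<^bsub>GR\<^esub> v" if "v \<in> rcarrier q" for A v
    using that by (simp add: a_minus_def a_inv_eq_rneg GR_simps)
  ultimately show ?thesis
    unfolding qcls_def by auto
qed

lemma qcls_evp_boc_lift_indep:
  assumes M: "matrix_over a b M"
    and x: "boc_lift a b M k s x" and x': "boc_lift a b M k s x'"
    and y: "boc_lift b a (\<lambda>j i. M i j) k t y" and y': "boc_lift b a (\<lambda>j i. M i j) k t y'"
  shows "qcls q k (evp q b (ell q a b M x) y) = qcls q k (evp q b (ell q a b M x') y')"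
proof -
  have xv: "x \<in> vcarrier q a" and x'v: "x' \<in> vcarrier q a" and yv: "y \<in> vcarrier q b" and y'v: "y' \<in> vcarrier q b"
    using x x' y y' by (simp_all add: boc_lift_def)
  have ell_x': "ell q a b M x' i \<in> Ipow q k" for i
    using x' by (auto simp: boc_lift_def intro: mprod_Ipow_vcarrier)
  have ellstar_y: "ellstar q a b M y j \<in> Ipow q k" for j
    using y by (auto simp: boc_lift_def ellstar_eq_ell_transpose intro: mprod_Ipow_vcarrier)
  obtain z where z: "z \<in> vcarrier q a" "\<forall>j<a. x j = x' j \<oplus>\<oplus> gm1 q \<star> z j"
    using smul_Nrm_eq_imp[OF xv x'v] x x' by (auto simp: boc_lift_def)
  obtain w where w: "w \<in> vcarrier q b" "\<forall>i<b. y i = y' i \<oplus>\<oplus> gm1 q \<star> w i"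
    using smul_Nrm_eq_imp[OF yv y'v] y y' by (auto simp: boc_lift_def)
  have "evp q b (ell q a b M x) y = evp q b (ell q a b M x') y \<oplus>\<oplus> gm1 q \<star> evp q b (ell q a b M z) y"
    using ell_add_gm1[OF M x'v z] by (intro evp_add_gm1_left) (auto intro: vcarrier_rcarrier ell_vcarrier yv)
  also have "evp q b (ell q a b M x') y = evp q b (ell q a b M x') y' \<oplus>\<oplus> gm1 q \<star> evp q b (ell q a b M x') w"
    using w by (intro evp_add_gm1_right) (auto intro: vcarrier_rcarrier ell_vcarrier y'v)
  also have "gm1 q \<star> evp q b (ell q a b M z) y = gm1 q \<star> evp q a (ellstar q a b M y) z"
    by (simp add: evp_ell_ellstar[OF M z(1) yv])
  finally have "evp q b (ell q a b M x) y = evp q b (ell q a b M x') y' \<oplus>\<oplus>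
      (gm1 q \<star> evp q b (ell q a b M x') w \<oplus>\<oplus> gm1 q \<star> evp q a (ellstar q a b M y) z)"
    by (simp add: R.a_assoc)
  moreover have "gm1 q \<star> evp q b (ell q a b M x') w \<oplus>\<oplus> gm1 q \<star> evp q a (ellstar q a b M y) z \<in> Ipow q (Suc k)"
    by (intro Ipow_add gm1_mult_Ipow evp_Ipow ell_x' ellstar_y vcarrier_rcarrier[OF w(1)] vcarrier_rcarrier[OF z(1)])
  ultimately show ?thesis
    by (simp add: qcls_add_Ipow)
qed

lemma boc_pair_eq:
  assumes M: "matrix_over a b M" and x: "boc_lift a b M k s x" and y: "boc_lift b a (\<lambda>j i. M i j) k t y"
  shows "boc_pair q a b M k s t = qcls q k (evp q b (ell q a b M x) y)"
proof -
  have "boc_pair q a b M k s t = (case SOME (x, y). boc_lift a b M k s x \<and> boc_lift b a (\<lambda>j i. M i j) k t y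
      of (x, y) \<Rightarrow> qcls q k (evp q b (ell q a b M x) y))"
    by (simp add: boc_pair_def boc_lift_def ellstar_eq_ell_transpose)
  also have "\<dots> = qcls q k (evp q b (ell q a b M x) y)"
  proof (rule someI2[of _ "(x, y)"])
    show "case (x, y) of (x, y) \<Rightarrow> boc_lift a b M k s x \<and> boc_lift b a (\<lambda>j i. M i j) k t y"
      using x y by simp
  next
    fix lifts
    assume "case lifts of (x, y) \<Rightarrow> boc_lift a b M k s x \<and> boc_lift b a (\<lambda>j i. M i j) k t y"
    then obtain x' y' where "lifts = (x', y')" "boc_lift a b M k s x'" "boc_lift b a (\<lambda>j i. M i j) k t y'"
      by (cases lifts) auto
    then show "(case lifts of (x, y) \<Rightarrow> qcls q k (evp q b (ell q a b M x) y)) = qcls q k (evp q b (ell q a b M x) y)"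
      using qcls_evp_boc_lift_indep[OF M _ x _ y] by simp
  qed
  finally show ?thesis .
qed

lemma bd_pair_eq_boc_pair:
  assumes M: "matrix_over a b M" and vanish: "binomials_vanish J"
    and s: "s \<in> S0k q a b M (Suc J)" and t: "t \<in> T0k q a b M (Suc J)"
  shows "bd_pair q a b M (Suc J) s t = boc_pair q a b M (Suc J) s t"
proof -
  note MT = matrix_over_transpose[OF M]
  obtain st xs where s_lift: "st \<in> Ssub q a b M" "smul q (rpow q (gm1 q) J) st = s"
    "xs \<in> vcarrier q a" "smul q (Dop q J) xs = st"
    using S0k_Dop_lift[OF M vanish s] by blast
  have "t \<in> S0k q b a (\<lambda>j i. M i j) (Suc J)"
    using t by (simp add: T0k_eq_S0k_transpose)
  then obtain tt yt where t_lift: "tt \<in> Ssub q b a (\<lambda>j i. M i j)" "smul q (rpow q (gm1 q) J) tt = t"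
    "yt \<in> vcarrier q b" "smul q (Dop q J) yt = tt"
    using S0k_Dop_lift[OF MT vanish] by blast
  show ?thesis
    unfolding bd_pair_def
  proof (rule someI2[of _ "(st, tt, xs, yt)"], clarsimp)
    show "st \<in> Ssub q a b M \<and> tt \<in> Tsub q a b M \<and> smul q (rpow q (gm1 q) J) st = s \<and>
        smul q (rpow q (gm1 q) J) tt = t \<and> xs \<in> vcarrier q a \<and> yt \<in> vcarrier q b \<and>
        smul q (Dop q J) xs = st \<and> smul q (Dop q J) yt = tt"
      using s_lift t_lift by (simp add: Tsub_eq_Ssub_transpose)
  next
    fix lifts
    assume "case lifts of (st, tt, xs, yt) \<Rightarrow> st \<in> Ssub q a b M \<and> tt \<in> Tsub q a b M \<and>
        smul q (rpow q (gm1 q) (Suc J - 1)) st = s \<and> smul q (rpow q (gm1 q) (Suc J - 1)) tt = t \<and>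
        xs \<in> vcarrier q a \<and> yt \<in> vcarrier q b \<and>
        smul q (Dop q (Suc J - 1)) xs = st \<and> smul q (Dop q (Suc J - 1)) yt = tt"
    then show "(case lifts of (st, tt, xs, yt) \<Rightarrow> qcls q (Suc J) (evp q b (ell q a b M xs) yt))
        = boc_pair q a b M (Suc J) s t"
      by (auto simp: Tsub_eq_Ssub_transpose
          intro!: boc_pair_eq[OF M, symmetric] Dop_lift_boc_lift[OF M vanish] Dop_lift_boc_lift[OF MT vanish])
  qed
qed

end

lemma prime_power_dvd_binomial:
  fixes p n j :: nat
  assumes p: "prime p" and j: "1 \<le> j" "j < p"
  shows "p ^ n dvd (p ^ n choose j)"
proof -
  obtain q' where q': "p ^ n = Suc q'"
    using p prime_gt_0_nat by (cases "p ^ n") auto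
  obtain j' where j': "j = Suc j'"
    using j by (cases j) auto
  have "j * (p ^ n choose j) = p ^ n * (q' choose j')"
    unfolding q' j' by (rule Suc_times_binomial)
  moreover have "\<not> p dvd j"
    using j by (auto dest: dvd_imp_le)
  then have "coprime (p ^ n) j"
    using p by (simp add: prime_imp_coprime)
  ultimately show ?thesis
    by (metis coprime_dvd_mult_right_iff dvd_triv_left)
qed

theorem theoremB5:
  fixes p n a b k :: nat and M :: "nat \<Rightarrow> nat \<Rightarrow> relt" and s t :: vect
  assumes "prime p" and "1 \<le> n"
    and "\<And>i j. i < b \<Longrightarrow> j < a \<Longrightarrow> M i j \<in> rcarrier (p ^ n)"
    and "1 \<le> k" and "k \<le> p - 1"
    and "s \<in> S0k (p ^ n) a b M k" and "t \<in> T0k (p ^ n) a b M k"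
  shows "bd_pair (p ^ n) a b M k s t = boc_pair (p ^ n) a b M k s t"
proof -
  have "1 < p"
    using assms(1) prime_gt_1_nat by blast
  moreover have "p \<le> p ^ n"
    using assms(2) \<open>1 < p\<close> by (simp add: self_le_power)
  ultimately interpret cyclic_group_ring "p ^ n"
    by unfold_locales simp
  obtain J where k: "k = Suc J"
    using assms(4) by (cases k) auto
  have "binomials_vanish J"
    using k assms(5) \<open>p \<le> p ^ n\<close> prime_power_dvd_binomial[OF assms(1)]
    by (auto simp: binomials_vanish_def simp del: of_nat_power intro!: int_dvd_int_iff[THEN iffD2])
  moreover have "matrix_over a b M"
    using assms(3) by (simp add: matrix_over_def)
  ultimately show ?thesis
    using bd_pair_eq_boc_pair assms(6,7) k by simp
qed

end
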